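(* Let $g:(0,\infty)\to(0,\infty)$ decrease monotonically to zero. Let $b\in\mathbb N$ and let $\mathfrak A\subseteq\mathfrak E(B_b)$ be an edge set with $|\mathfrak A|=m$. Then $$\mathbb P\Big[\liminf_{n\to\infty}\bigcap_{z\in B_{n+b}}J_{g(n)}(\mathfrak A\circ\tau_z)\Big]=\begin{cases}1,&\text{if }\int_0^\infty u^{d-1}\mathbb P[w\le g(u)]^m\,du<\infty,\\ 0,&\text{otherwise.}\end{cases}$$
   Context: Let $d\ge2$, $\mathfrak E_d$ the nearest-neighbour edges of $\mathbb Z^d$. Conductances $(w_e)_{e\in\mathfrak E_d}$ are i.i.d. $(0,\infty)$-valued with law $\mathbb P$; $w$ a generic copy. $B_n=[-n,n]^d\cap\mathbb Z^d$. For $\alpha>0$ and $\mathfrak A\subseteq\mathfrak E_d$, $J_\alpha(\mathfrak A)=\{\exists e\in\mathfrak A: w_e>\alpha\}$. For $A\subset\mathbb Z^d$, $\mathfrak E(A)=\{\{x,x+\boldsymbol e_j\}: x\in A,\ j\in\{1,\dots,d\}\}$ with $\boldsymbol e_j$ the canonical basis vectors. For $z\in\mathbb Z^d$, $\mathfrak A\circ\tau_z=\{\{x+z,y+z\}:\{x,y\}\in\mathfrak A\}$. For events $E_n$, $\liminf_n E_n=\bigcup_n\bigcap_{k\ge n}E_k$. *)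

theory Defs
  imports "HOL-Probability.Probability"
begin

text \<open>Points of Z^d are int^'d, with d = CARD('d). Edges are unordered pairs,
represented as two-element sets of points.\<close>

definition nn_edges :: "(int^'d) set set" where
  "nn_edges = {{x, x + axis j 1} | x j. True}"

definition box :: "nat \<Rightarrow> (int^'d) set" where
  "box n = {x. \<forall>i. \<bar>x $ i\<bar> \<le> int n}"

definition edges_of :: "(int^'d) set \<Rightarrow> (int^'d) set set" where
  "edges_of A = {{x, x + axis j 1} | x j. x \<in> A}"

definition shift_edges :: "(int^'d) set set \<Rightarrow> int^'d \<Rightarrow> (int^'d) set set" where
  "shift_edges \<A> z = (\<lambda>e. (\<lambda>x. x + z) ` e) ` \<A>"

definition J_event :: "'a measure \<Rightarrow> ((int^'d) set \<Rightarrow> 'a \<Rightarrow> real) \<Rightarrow> real \<Rightarrow> (int^'d) set set \<Rightarrow> 'a set" where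
  "J_event M w \<alpha> \<A> = {\<omega> \<in> space M. \<exists>e\<in>\<A>. w e \<omega> > \<alpha>}"

end

theory Submission
  imports Defs
begin

text \<open>
  Let \<open>q(u) = P[w \<le> g(u)]^m\<close> be the probability that every edge of one translate of the
  pattern has conductance at most \<open>g(u)\<close>. The shell of radius \<open>r\<close> of the box has about
  \<open>r^(d-1)\<close> points, so both directions amount to comparing \<open>\<integral> u^(d-1) q(u) du\<close> with
  the series \<open>\<Sum> s^(d-1) q(s)\<close>.

  If the integral converges, the expected number of shells containing a translate whose
  edges are all below threshold is finite, so by Borel--Cantelli almost surely only finitely
  many shells do; the finitely many translates inside a fixed box are then dealt with by
  positivity of the conductances and \<open>g \<rightarrow> 0\<close>.

  If it diverges, consider the translates at the points of a grid of spacing \<open>K > 2b + 1\<close>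
  on the faces \<open>z\<^sub>i = K s\<close>. They use pairwise disjoint edge sets, hence are independent,
  and the probability that all of them exceed their threshold from level \<open>n\<close> on is at most
  \<open>exp (- \<Sum>s\<ge>n. s^(d-1) q(K s - b)) = 0\<close>.
\<close>

section \<open>Boxes, shells and translated edge patterns\<close>

lemma vec_coordinatewise_eq_image_PiE:
  "{z::'b^'n. \<forall>i. z $ i \<in> T i} = vec_lambda ` PiE UNIV T"
proof (rule set_eqI, rule iffI)
  fix z :: "'b^'n" assume "z \<in> {z. \<forall>i. z $ i \<in> T i}"
  then have "(\<lambda>i. z $ i) \<in> PiE UNIV T" by auto
  then show "z \<in> vec_lambda ` PiE UNIV T" by (metis image_eqI vec_lambda_eta)
qed auto

lemma
  assumes "\<And>i. finite (T i)"
  shows finite_vec_coordinatewise: "finite {z::'b^'n. \<forall>i. z $ i \<in> T i}"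
    and card_vec_coordinatewise: "card {z::'b^'n. \<forall>i. z $ i \<in> T i} = (\<Prod>i\<in>UNIV. card (T i))"
proof -
  have "inj_on (vec_lambda :: ('n \<Rightarrow> 'b) \<Rightarrow> 'b^'n) (PiE UNIV T)"
    by (intro inj_onI) (metis vec_lambda_inverse UNIV_I)
  then show "finite {z::'b^'n. \<forall>i. z $ i \<in> T i}" "card {z::'b^'n. \<forall>i. z $ i \<in> T i} = (\<Prod>i\<in>UNIV. card (T i))"
    using assms by (simp_all add: vec_coordinatewise_eq_image_PiE card_image card_PiE finite_PiE)
qed

lemma box_eq_coordinatewise: "box n = {z::int^'d. \<forall>i. z $ i \<in> {-int n..int n}}"
  unfolding box_def by (simp add: abs_le_iff minus_le_iff conj_commute)

lemma finite_box: "finite (box n :: (int^'d) set)"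
  unfolding box_eq_coordinatewise by (rule finite_vec_coordinatewise) simp

lemma box_mono: "m \<le> n \<Longrightarrow> box m \<subseteq> box n"
  unfolding box_def by (auto intro: order_trans)

lemma zero_in_box: "0 \<in> box n"
  unfolding box_def by simp

lemma card_box_shell_le:
  assumes "r \<ge> 1"
  shows "card (box r - box (r - 1) :: (int^'d) set) \<le> 2 * CARD('d) * (2 * r + 1) ^ (CARD('d) - 1)"
proof -
  define T :: "'d \<Rightarrow> 'd \<Rightarrow> int set" where
    "T i j = (if j = i then {- int r, int r} else {- int r..int r})" for i j
  define face where "face i = {z::int^'d. \<forall>j. z $ j \<in> T i j}" for i
  have finite_T: "finite (T i j)" for i j unfolding T_def by auto
  have shell_sub: "box r - box (r - 1) \<subseteq> (\<Union>i. face i)"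
  proof
    fix z :: "int^'d" assume z: "z \<in> box r - box (r - 1)"
    then obtain i where "\<not> \<bar>z $ i\<bar> \<le> int (r - 1)" unfolding box_def by auto
    moreover have bounded: "\<bar>z $ j\<bar> \<le> int r" for j using z unfolding box_def by auto
    ultimately have "\<bar>z $ i\<bar> = int r" using assms bounded[of i] by (simp add: of_nat_diff)
    then have "z $ i \<in> {- int r, int r}" by (auto simp: abs_eq_iff)
    moreover have "z $ j \<in> {- int r..int r}" for j using bounded[of j] by (simp add: abs_le_iff)
    ultimately have "z \<in> face i" unfolding face_def T_def by simp
    then show "z \<in> (\<Union>i. face i)" by blast
  qed
  have card_face: "card (face i) = 2 * (2 * r + 1) ^ (CARD('d) - 1)" for i
  proof -
    have "card (face i) = card (T i i) * (\<Prod>j\<in>UNIV - {i}. card (T i j))"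
      unfolding face_def card_vec_coordinatewise[OF finite_T] by (rule prod.remove) auto
    also have "\<dots> = 2 * (\<Prod>j\<in>UNIV - {i}. 2 * r + 1)"
      unfolding T_def using assms by (intro arg_cong2[where f = "(*)"] prod.cong) (auto simp: nat_add_distrib)
    finally show ?thesis by (simp add: card_Diff_singleton)
  qed
  have "finite (face i)" for i unfolding face_def by (rule finite_vec_coordinatewise[OF finite_T])
  then have "card (box r - box (r - 1) :: (int^'d) set) \<le> card (\<Union>i. face i)"
    using shell_sub by (intro card_mono) auto
  also have "\<dots> \<le> (\<Sum>i\<in>UNIV. card (face i))" by (rule card_UN_le) simp
  finally show ?thesis by (simp add: card_face)
qed

lemma card_box_shell_le_linear:
  assumes "1 \<le> s"
  shows "real (card (box (s + b + 1) - box (s + b) :: (int^'d) set))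
    \<le> 2 * real CARD('d) * ((2 * real b + 5) * real s) ^ (CARD('d) - 1)"
proof -
  have "card (box (s + b + 1) - box (s + b) :: (int^'d) set)
      \<le> 2 * CARD('d) * (2 * (s + b + 1) + 1) ^ (CARD('d) - 1)"
    using card_box_shell_le[of "s + b + 1"] by simp
  then have "real (card (box (s + b + 1) - box (s + b) :: (int^'d) set))
      \<le> 2 * real CARD('d) * (2 * (real s + real b + 1) + 1) ^ (CARD('d) - 1)"
    by (metis (mono_tags) of_nat_le_iff of_nat_mult of_nat_numeral of_nat_power of_nat_add of_nat_1)
  also have "\<dots> \<le> 2 * real CARD('d) * ((2 * real b + 5) * real s) ^ (CARD('d) - 1)"
  proof (intro mult_left_mono power_mono)
    have "real b * 1 \<le> real b * real s" using assms by (intro mult_left_mono) auto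
    then show "2 * (real s + real b + 1) + 1 \<le> (2 * real b + 5) * real s"
      using assms by (simp add: algebra_simps)
  qed auto
  finally show ?thesis .
qed

lemma box_shell_between:
  assumes "z \<in> box n" "z \<notin> box m"
  obtains r where "m < r" "r \<le> n" "z \<in> box r - box (r - 1)"
proof -
  define r where "r = (LEAST r. z \<in> box r)"
  have "z \<in> box r" "r \<le> n" unfolding r_def using assms(1) by (auto intro: LeastI Least_le)
  moreover have "m < r"
    using box_mono \<open>z \<in> box r\<close> assms(2) by (meson not_le subsetD)
  moreover have "z \<notin> box (r - 1)"
    using \<open>m < r\<close> unfolding r_def by (metis diff_less gr_zeroI less_one not_less0 not_less_Least r_def)
  ultimately show ?thesis using that by blast
qed

lemma edges_of_subset_nn_edges: "edges_of A \<subseteq> nn_edges"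
  unfolding edges_of_def nn_edges_def by blast

lemma finite_edges_of:
  assumes "finite A"
  shows "finite (edges_of A)"
proof -
  have "edges_of A = (\<lambda>(x, j). {x, x + axis j 1}) ` (A \<times> UNIV)"
    unfolding edges_of_def by auto
  then show ?thesis using assms by simp
qed

lemma shift_edges_subset_nn_edges:
  assumes "\<A> \<subseteq> nn_edges"
  shows "shift_edges \<A> z \<subseteq> nn_edges"
proof
  fix e assume "e \<in> shift_edges \<A> z"
  then obtain x j where "e = (\<lambda>y. y + z) ` {x, x + axis j 1}"
    using assms unfolding shift_edges_def nn_edges_def by auto
  then have "e = {x + z, (x + z) + axis j 1}" by (simp add: algebra_simps)
  then show "e \<in> nn_edges" unfolding nn_edges_def by blast
qed

lemma finite_shift_edges: "finite \<A> \<Longrightarrow> finite (shift_edges \<A> z)"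
  unfolding shift_edges_def by simp

lemma card_shift_edges: "card (shift_edges \<A> z) = card \<A>"
proof -
  have "inj (\<lambda>e. (\<lambda>x. x + z) ` e)"
    by (intro injI) (simp add: inj_image_eq_iff)
  then show ?thesis unfolding shift_edges_def by (simp add: card_image inj_on_subset)
qed

lemma shift_edges_overlap_coord_le:
  assumes "\<A> \<subseteq> edges_of (box b)" "e \<in> shift_edges \<A> z" "e \<in> shift_edges \<A> z'"
  shows "\<bar>z $ i - z' $ i\<bar> \<le> 2 * int b + 1"
proof -
  obtain x j where x: "x \<in> box b" "e = {x + z, x + axis j 1 + z}"
    using assms(1,2) unfolding shift_edges_def edges_of_def by auto
  obtain x' j' where x': "x' \<in> box b" "e = {x' + z', x' + axis j' 1 + z'}"
    using assms(1,3) unfolding shift_edges_def edges_of_def by auto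
  have "\<bar>x $ i\<bar> \<le> int b" "\<bar>x' $ i\<bar> \<le> int b" "\<bar>axis j' (1::int) $ i\<bar> \<le> 1"
    using x x' unfolding box_def by (auto simp: axis_def)
  moreover have "x + z = x' + z' \<or> x + z = x' + axis j' 1 + z'"
    using x x' by auto
  then have "x $ i + z $ i = x' $ i + z' $ i \<or> x $ i + z $ i = x' $ i + axis j' 1 $ i + z' $ i"
    by (metis vector_add_component)
  ultimately show ?thesis by linarith
qed

definition grid_face :: "nat \<Rightarrow> 'd \<Rightarrow> nat \<Rightarrow> (int^'d) set" where
  "grid_face K i s = {z. \<forall>j. z $ j \<in> (if j = i then {int (K * s)} else (\<lambda>t. int K * t) ` {0..<int s})}"

lemma grid_face_component:
  "z \<in> grid_face K i s \<Longrightarrow> z $ j \<in> (if j = i then {int (K * s)} else (\<lambda>t. int K * t) ` {0..<int s})"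
  unfolding grid_face_def by blast

lemma finite_grid_face: "finite (grid_face K i s)"
  unfolding grid_face_def by (rule finite_vec_coordinatewise) simp

lemma card_grid_face:
  assumes "K > 0"
  shows "card (grid_face K i s :: (int^'d) set) = s ^ (CARD('d) - 1)"
proof -
  define T :: "'d \<Rightarrow> int set" where
    "T j = (if j = i then {int (K * s)} else (\<lambda>t. int K * t) ` {0..<int s})" for j
  have "inj_on (\<lambda>t::int. int K * t) X" for X using assms by (intro inj_onI) auto
  then have card_T: "card (T j) = (if j = i then 1 else s)" for j
    unfolding T_def by (simp add: card_image)
  have "card (grid_face K i s :: (int^'d) set) = (\<Prod>j\<in>UNIV. card (T j))"
    unfolding grid_face_def T_def[symmetric] by (rule card_vec_coordinatewise) (simp add: T_def)
  also have "\<dots> = card (T i) * (\<Prod>j\<in>UNIV - {i}. card (T j))"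
    by (rule prod.remove) simp_all
  also have "\<dots> = (\<Prod>j\<in>UNIV - {i}. s)"
    by (simp add: card_T)
  finally show ?thesis by (simp add: card_Diff_singleton)
qed

lemma grid_face_nonempty:
  assumes "s \<ge> 1"
  shows "grid_face K i s \<noteq> {}"
proof -
  have "(\<chi> j. if j = i then int (K * s) else 0) \<in> grid_face K i s"
    unfolding grid_face_def using assms by (auto intro!: image_eqI[of _ _ 0])
  then show ?thesis by blast
qed

lemma grid_face_subset_box: "grid_face K i s \<subseteq> box (K * s)"
proof
  fix z assume "z \<in> grid_face K i s"
  note z = grid_face_component[OF this]
  have "\<bar>z $ j\<bar> \<le> int (K * s)" for j
  proof (cases "j = i")
    case False
    then obtain t where "t \<in> {0..<int s}" "z $ j = int K * t" using z[of j] by auto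
    then show ?thesis by (simp add: abs_mult mult_left_mono)
  qed (use z[of j] in simp)
  then show "z \<in> box (K * s)" unfolding box_def by simp
qed

lemma grid_face_coord: "z \<in> grid_face K i s \<Longrightarrow> z $ i = int (K * s)"
  using grid_face_component[of z K i s i] by simp

lemma grid_face_dvd: "z \<in> grid_face K i s \<Longrightarrow> int K dvd z $ j"
  using grid_face_component[of z K i s j] by (cases "j = i") auto

lemma shift_edges_disjoint:
  assumes "\<A> \<subseteq> edges_of (box b)" "2 * b + 1 < K" "\<And>j. int K dvd z $ j - z' $ j" "z \<noteq> z'"
  shows "shift_edges \<A> z \<inter> shift_edges \<A> z' = {}"
proof (rule ccontr)
  assume "shift_edges \<A> z \<inter> shift_edges \<A> z' \<noteq> {}"
  then obtain e where "e \<in> shift_edges \<A> z" "e \<in> shift_edges \<A> z'" by blast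
  then have close: "\<bar>z $ j - z' $ j\<bar> \<le> 2 * int b + 1" for j
    by (rule shift_edges_overlap_coord_le[OF assms(1)])
  obtain j where "z $ j \<noteq> z' $ j" using assms(4) by (metis vec_eq_iff)
  then have "int K \<le> \<bar>z $ j - z' $ j\<bar>"
    using assms(3)[of j] by (auto dest: dvd_imp_le_int[rotated])
  then show False using close[of j] assms(2) by linarith
qed

lemma disjoint_shift_edges_grid_faces:
  assumes "\<A> \<subseteq> edges_of (box b)" "2 * b + 1 < K"
  shows "disjoint_family_on (\<lambda>p. shift_edges \<A> (snd p)) (Sigma S (grid_face K i))"
  unfolding disjoint_family_on_def
proof (intro ballI impI)
  fix p q assume "p \<in> Sigma S (grid_face K i)" "q \<in> Sigma S (grid_face K i)" "p \<noteq> q"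
  then have face: "snd p \<in> grid_face K i (fst p)" "snd q \<in> grid_face K i (fst q)" by auto
  have "snd p \<noteq> snd q"
  proof
    assume "snd p = snd q"
    moreover from this have "fst p = fst q"
      using grid_face_coord[OF face(1)] grid_face_coord[OF face(2)] assms(2) by simp
    ultimately show False using \<open>p \<noteq> q\<close> by (simp add: prod_eq_iff)
  qed
  moreover have "int K dvd snd p $ j - snd q $ j" for j
    using grid_face_dvd[OF face(1)] grid_face_dvd[OF face(2)] by (rule dvd_diff)
  ultimately show "shift_edges \<A> (snd p) \<inter> shift_edges \<A> (snd q) = {}"
    by (intro shift_edges_disjoint[OF assms])
qed

section \<open>Comparing integrals over \<open>(0, \<infinity>)\<close> with series\<close>

lemma grid_cell_iff:
  fixes K u :: real
  assumes "K > 0" "u > 0"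
  shows "K * real s < u \<and> u \<le> K * (real s + 1) \<longleftrightarrow> s = nat (\<lceil>u / K\<rceil> - 1)"
proof -
  have "K * real s < u \<and> u \<le> K * (real s + 1) \<longleftrightarrow> real s < u / K \<and> u / K \<le> real s + 1"
    using assms by (simp add: field_simps)
  also have "\<dots> \<longleftrightarrow> \<lceil>u / K\<rceil> = int s + 1"
    by (simp add: ceiling_eq_iff)
  also have "\<dots> \<longleftrightarrow> s = nat (\<lceil>u / K\<rceil> - 1)"
    using assms by auto
  finally show ?thesis .
qed

lemma suminf_grid_step_function:
  fixes K u :: real and c :: "nat \<Rightarrow> ennreal"
  assumes "K > 0" "u > 0"
  shows "(\<Sum>s. c s * indicator {K * real s<..K * (real s + 1)} u) = c (nat (\<lceil>u / K\<rceil> - 1))"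
proof -
  let ?s = "nat (\<lceil>u / K\<rceil> - 1)"
  have "(\<Sum>s. c s * indicator {K * real s<..K * (real s + 1)} u)
      = (\<Sum>s\<in>{?s}. c s * indicator {K * real s<..K * (real s + 1)} u)"
    by (rule suminf_finite) (use grid_cell_iff[OF assms] in auto)
  then show ?thesis using grid_cell_iff[OF assms, of ?s] by simp
qed

lemma nn_integral_grid_step_function:
  fixes K :: real and c :: "nat \<Rightarrow> ennreal"
  assumes "K > 0"
  shows "(\<integral>\<^sup>+ u. (\<Sum>s. c s * indicator {K * real s<..K * (real s + 1)} u) \<partial>lborel) = (\<Sum>s. c s * K)"
proof -
  have "(\<integral>\<^sup>+ u. (\<Sum>s. c s * indicator {K * real s<..K * (real s + 1)} u) \<partial>lborel)
      = (\<Sum>s. \<integral>\<^sup>+ u. c s * indicator {K * real s<..K * (real s + 1)} u \<partial>lborel)"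
    by (intro nn_integral_suminf) auto
  also have "\<dots> = (\<Sum>s. c s * K)"
    using assms by (intro suminf_cong) (simp add: nn_integral_cmult_indicator algebra_simps)
  finally show ?thesis .
qed

lemma grid_step_function_nonpos:
  fixes K u :: real
  assumes "K > 0" "u \<le> 0"
  shows "u \<notin> {K * real s<..K * (real s + 1)}"
proof -
  have "0 \<le> K * real s" using assms by simp
  then show ?thesis unfolding greaterThanAtMost_iff using assms(2) by linarith
qed

lemma summable_if_nn_integral_Ioi_finite:
  fixes f :: "real \<Rightarrow> real" and c :: "nat \<Rightarrow> real"
  assumes fin: "(\<integral>\<^sup>+ u\<in>{0<..}. ennreal (f u) \<partial>lborel) < \<infinity>"
    and nonneg: "\<And>s. 0 \<le> c s"
    and below: "\<And>s u. real s < u \<Longrightarrow> u \<le> real s + 1 \<Longrightarrow> c s \<le> f u"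
  shows "summable c"
proof -
  have "(\<Sum>s. ennreal (c s))
      = (\<integral>\<^sup>+ u. (\<Sum>s. ennreal (c s) * indicator {1 * real s<..1 * (real s + 1)} u) \<partial>lborel)"
    using nn_integral_grid_step_function[of 1] by simp
  also have "\<dots> \<le> (\<integral>\<^sup>+ u\<in>{0<..}. ennreal (f u) \<partial>lborel)"
  proof (rule nn_integral_mono)
    fix u :: real
    show "(\<Sum>s. ennreal (c s) * indicator {1 * real s<..1 * (real s + 1)} u)
        \<le> ennreal (f u) * indicator {0<..} u"
    proof (cases "u > 0")
      case True
      then have "real (nat (\<lceil>u\<rceil> - 1)) < u \<and> u \<le> real (nat (\<lceil>u\<rceil> - 1)) + 1"
        using grid_cell_iff[of 1 u "nat (\<lceil>u\<rceil> - 1)"] by simp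
      then have "c (nat (\<lceil>u\<rceil> - 1)) \<le> f u" using below by blast
      then show ?thesis using suminf_grid_step_function[of 1 u] True by (simp add: ennreal_leI)
    qed (simp add: grid_step_function_nonpos)
  qed
  finally have "(\<Sum>s. ennreal (c s)) \<noteq> \<infinity>" using fin by (auto simp: top_unique)
  then show ?thesis using nonneg by (intro summable_suminf_not_top) auto
qed

lemma nn_integral_Ioi_finite_if_summable:
  fixes f :: "real \<Rightarrow> real" and c :: "nat \<Rightarrow> real" and K :: real
  assumes "K > 0" and sum: "summable c" and nonneg: "\<And>s. 0 \<le> c s"
    and above: "\<And>s u. K * real s < u \<Longrightarrow> u \<le> K * (real s + 1) \<Longrightarrow> f u \<le> c s"
  shows "(\<integral>\<^sup>+ u\<in>{0<..}. ennreal (f u) \<partial>lborel) < \<infinity>"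
proof -
  have "(\<integral>\<^sup>+ u\<in>{0<..}. ennreal (f u) \<partial>lborel)
      \<le> (\<integral>\<^sup>+ u. (\<Sum>s. ennreal (c s) * indicator {K * real s<..K * (real s + 1)} u) \<partial>lborel)"
  proof (rule nn_integral_mono)
    fix u :: real
    show "ennreal (f u) * indicator {0<..} u
        \<le> (\<Sum>s. ennreal (c s) * indicator {K * real s<..K * (real s + 1)} u)"
    proof (cases "u > 0")
      case True
      then have "f u \<le> c (nat (\<lceil>u / K\<rceil> - 1))"
        using grid_cell_iff[OF \<open>K > 0\<close> True, of "nat (\<lceil>u / K\<rceil> - 1)"] above by blast
      then show ?thesis using suminf_grid_step_function[OF \<open>K > 0\<close> True] True by (simp add: ennreal_leI)
    qed simp
  qed
  also have "\<dots> = (\<Sum>s. ennreal (c s) * K)" by (rule nn_integral_grid_step_function[OF \<open>K > 0\<close>])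
  also have "\<dots> = ennreal (\<Sum>s. c s * K)"
    using assms by (subst suminf_ennreal2[symmetric]) (auto intro: summable_mult2 simp: ennreal_mult'')
  finally show ?thesis by (simp add: le_less_trans)
qed

lemma nn_integral_Ioi_power_infinite:
  "\<not> (\<integral>\<^sup>+ u\<in>{0<..}. ennreal (u ^ n) \<partial>lborel) < \<infinity>"
proof
  assume "(\<integral>\<^sup>+ u\<in>{0<..}. ennreal (u ^ n) \<partial>lborel) < \<infinity>"
  then have "summable (\<lambda>s. real s ^ n)"
    by (rule summable_if_nn_integral_Ioi_finite) (auto intro: power_mono)
  then have "(\<lambda>s. real s ^ n) \<longlonglongrightarrow> 0" by (rule summable_LIMSEQ_zero)
  moreover have "\<forall>\<^sub>F s in sequentially. 1 \<le> real s ^ n"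
    by (rule eventually_sequentiallyI[of 1]) (simp add: one_le_power)
  ultimately have "1 \<le> (0::real)" by (rule tendsto_lowerbound) simp
  then show False by simp
qed

lemma one_minus_power_le_exp:
  fixes x :: real
  assumes "x \<le> 1"
  shows "(1 - x) ^ n \<le> exp (- (real n * x))"
proof -
  have "(1 - x) ^ n \<le> exp (- x) ^ n"
    using assms exp_minus_ge[of x] by (intro power_mono) auto
  then show ?thesis by (simp add: exp_of_nat_mult[symmetric])
qed

lemma summable_if_tail_sums_bounded:
  fixes a :: "nat \<Rightarrow> real"
  assumes "\<And>s. 0 \<le> a s" and "\<And>N. (\<Sum>s\<in>{n..<N}. a s) \<le> B"
  shows "summable a"
proof -
  have "summable (\<lambda>s. a (s + n))"
  proof (rule summableI_nonneg_bounded)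
    show "(\<Sum>s<N. a (s + n)) \<le> B" for N
      using assms(2)[of "N + n"] by (simp add: sum.shift_bounds_nat_ivl[symmetric] lessThan_atLeast0 add.commute)
  qed (use assms(1) in simp)
  then show ?thesis by (rule summable_iff_shift[THEN iffD1])
qed

section \<open>Independent identically distributed conductances\<close>

lemma J_event_antimono: "s \<le> t \<Longrightarrow> J_event M w t S \<subseteq> J_event M w s S"
  unfolding J_event_def by (blast intro: le_less_trans)

locale iid_conductances = prob_space M for M :: "'a measure" +
  fixes w :: "(int^'d) set \<Rightarrow> 'a \<Rightarrow> real" and \<mu> :: "real measure"
  assumes indep_conductances: "indep_vars (\<lambda>_. borel) w nn_edges"
    and distr_conductance: "\<And>e. e \<in> nn_edges \<Longrightarrow> distr M borel (w e) = \<mu>"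
    and conductance_pos: "\<And>e \<omega>. e \<in> nn_edges \<Longrightarrow> \<omega> \<in> space M \<Longrightarrow> w e \<omega> > 0"
begin

lemma measurable_conductance: "e \<in> nn_edges \<Longrightarrow> w e \<in> borel_measurable M"
  using indep_conductances unfolding indep_vars_def by auto

lemma axis_edge_in_nn_edges: "{0, axis j 1} \<in> nn_edges"
  unfolding nn_edges_def by force

lemma prob_space_conductance_law: "prob_space \<mu>"
  using distr_conductance[OF axis_edge_in_nn_edges] measurable_conductance[OF axis_edge_in_nn_edges]
  by (metis prob_space_distr)

lemma sets_conductance_law: "sets \<mu> = sets borel"
  using distr_conductance[OF axis_edge_in_nn_edges] by (metis sets_distr)

lemma prob_conductance_le:
  assumes "e \<in> nn_edges"
  shows "prob (w e -` {..t} \<inter> space M) = measure \<mu> {..t}"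
proof -
  have "prob (w e -` {..t} \<inter> space M) = measure (distr M borel (w e)) {..t}"
    using measurable_conductance[OF assms] by (intro measure_distr[symmetric]) auto
  then show ?thesis using distr_conductance[OF assms] by simp
qed

lemma sets_J_event: "finite S \<Longrightarrow> S \<subseteq> nn_edges \<Longrightarrow> J_event M w t S \<in> events"
  unfolding J_event_def using measurable_conductance by measurable auto

lemma prob_J_event:
  assumes "finite S" "S \<subseteq> nn_edges"
  shows "prob (J_event M w t S) = 1 - measure \<mu> {..t} ^ card S"
proof (cases "S = {}")
  case False
  have "space M - J_event M w t S = (\<Inter>e\<in>S. w e -` {..t} \<inter> space M)"
    using False unfolding J_event_def by (auto simp: not_le)
  then have "prob (space M - J_event M w t S) = (\<Prod>e\<in>S. prob (w e -` {..t} \<inter> space M))"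
    using indep_varsD[OF indep_conductances False assms(1,2)] by simp
  also have "\<dots> = measure \<mu> {..t} ^ card S"
    using assms(2) by (simp add: prob_conductance_le subset_eq)
  finally show ?thesis using prob_compl[OF sets_J_event[OF assms]] by simp
qed (simp add: J_event_def)

lemma prob_INT_J_event_disjoint:
  assumes "finite I" "I \<noteq> {}" "disjoint_family_on S I"
    and edges: "\<And>z. z \<in> I \<Longrightarrow> finite (S z) \<and> S z \<noteq> {} \<and> S z \<subseteq> nn_edges"
  shows "prob (\<Inter>z\<in>I. J_event M w (t z) (S z)) = (\<Prod>z\<in>I. 1 - measure \<mu> {..t z} ^ card (S z))"
proof -
  \<comment> \<open>\<open>J_event\<close> on \<open>S z\<close> says that the maximal conductance on \<open>S z\<close> exceeds \<open>t z\<close>;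
    maxima over disjoint edge sets are independent.\<close>
  define Y where "Y z \<omega> = Max ((\<lambda>e. w e \<omega>) ` S z)" for z \<omega>
  have "indep_vars (\<lambda>z. PiM (S z) (\<lambda>_. borel)) (\<lambda>z \<omega>. restrict (\<lambda>e. w e \<omega>) (S z)) I"
    using edges by (intro indep_vars_restrict[OF indep_conductances] assms(3)) auto
  moreover have "(\<lambda>f. Max (f ` T)) \<in> borel_measurable (PiM T (\<lambda>_. borel :: real measure))"
    if "finite T" for T
    using that by measurable
  ultimately have "indep_vars (\<lambda>_. borel) (\<lambda>z \<omega>. Max (restrict (\<lambda>e. w e \<omega>) (S z) ` S z)) I"
    using edges by (intro indep_vars_compose2[where Y = "\<lambda>z f. Max (f ` S z)"]) auto
  then have indep_Y: "indep_vars (\<lambda>_. borel) Y I"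
    unfolding Y_def by (simp cong: image_cong)
  have "t z < Y z \<omega> \<longleftrightarrow> (\<exists>e\<in>S z. t z < w e \<omega>)" if "z \<in> I" for z \<omega>
    using edges[OF that] unfolding Y_def by (simp add: Max_gr_iff)
  then have "J_event M w (t z) (S z) = Y z -` {t z<..} \<inter> space M" if "z \<in> I" for z
    using that unfolding J_event_def by auto
  then have "prob (\<Inter>z\<in>I. J_event M w (t z) (S z)) = (\<Prod>z\<in>I. prob (J_event M w (t z) (S z)))"
    using indep_varsD[OF indep_Y assms(2,1) order_refl, of "\<lambda>z. {t z<..}"] by simp
  also have "\<dots> = (\<Prod>z\<in>I. 1 - measure \<mu> {..t z} ^ card (S z))"
    using edges by (intro prod.cong refl prob_J_event) auto
  finally show ?thesis .
qed

end

locale decaying_pattern = iid_conductances M w \<mu>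
  for M :: "'a measure" and w :: "(int^'d) set \<Rightarrow> 'a \<Rightarrow> real" and \<mu> :: "real measure" +
  fixes g :: "real \<Rightarrow> real" and b :: nat and \<A> :: "(int^'d) set set"
  assumes threshold_pos: "\<And>u. u > 0 \<Longrightarrow> g u > 0"
    and threshold_antimono: "\<And>u v. 0 < u \<Longrightarrow> u \<le> v \<Longrightarrow> g v \<le> g u"
    and threshold_tendsto_0: "(g \<longlongrightarrow> 0) at_top"
    and pattern_subset: "\<A> \<subseteq> edges_of (box b)"
begin

definition low_prob :: "real \<Rightarrow> real" where
  "low_prob u = measure \<mu> {..g u} ^ card \<A>"

definition liminf_J :: "'a set" where
  "liminf_J = (\<Union>n\<in>{1..}. \<Inter>k\<in>{n..}. \<Inter>z\<in>box (k + b). J_event M w (g (real k)) (shift_edges \<A> z))"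

lemma finite_pattern: "finite \<A>"
  using pattern_subset finite_edges_of[OF finite_box] by (rule finite_subset)

lemma finite_shifted_pattern: "finite (shift_edges \<A> z)"
  using finite_pattern by (rule finite_shift_edges)

lemma shifted_pattern_subset: "shift_edges \<A> z \<subseteq> nn_edges"
  using pattern_subset edges_of_subset_nn_edges by (intro shift_edges_subset_nn_edges) blast

lemma sets_J_shifted_pattern: "J_event M w t (shift_edges \<A> z) \<in> events"
  using finite_shifted_pattern shifted_pattern_subset by (rule sets_J_event)

lemma prob_J_shifted_pattern: "prob (J_event M w (g u) (shift_edges \<A> z)) = 1 - low_prob u"
  using prob_J_event[OF finite_shifted_pattern shifted_pattern_subset]
  by (simp add: low_prob_def card_shift_edges)

lemma low_prob_nonneg: "0 \<le> low_prob u"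
  unfolding low_prob_def by simp

lemma low_prob_le_1: "low_prob u \<le> 1"
proof -
  interpret law: prob_space \<mu> by (rule prob_space_conductance_law)
  show ?thesis unfolding low_prob_def by (simp add: power_le_one)
qed

lemma low_prob_antimono:
  assumes "0 < u" "u \<le> v"
  shows "low_prob v \<le> low_prob u"
proof -
  interpret law: prob_space \<mu> by (rule prob_space_conductance_law)
  have "measure \<mu> {..g v} \<le> measure \<mu> {..g u}"
    using threshold_antimono[OF assms] sets_conductance_law by (intro law.finite_measure_mono) auto
  then show ?thesis unfolding low_prob_def by (simp add: power_mono)
qed

lemma liminf_J_empty_pattern:
  assumes "\<A> = {}"
  shows "liminf_J = {}"
proof -
  have "J_event M w t (shift_edges \<A> z) = {}" for t z
    using assms by (simp add: shift_edges_def J_event_def)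
  then show ?thesis unfolding liminf_J_def using zero_in_box by blast
qed

lemma sets_liminf_J: "liminf_J \<in> events"
proof -
  have "(\<Inter>z\<in>box (k + b). J_event M w (g (real k)) (shift_edges \<A> z)) \<in> events" for k
    using finite_box sets_J_shifted_pattern by (intro sets.finite_INT) (auto intro: zero_in_box)
  then show ?thesis
    unfolding liminf_J_def by (intro sets.countable_UN'' sets.countable_INT') auto
qed


section \<open>The convergent case\<close>

text \<open>A point of the shell of radius \<open>r\<close> lies in \<open>box (k + b)\<close> only for \<open>k \<ge> r - b\<close>,
  where the threshold \<open>g k\<close> is at most \<open>g (max (r - b) 1)\<close>.\<close>

definition low_in_shell :: "nat \<Rightarrow> 'a set" where
  "low_in_shell r = (\<Union>z\<in>box r - box (r - 1).
     space M - J_event M w (g (real (max (r - b) 1))) (shift_edges \<A> z))"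

lemma sets_low_in_shell: "low_in_shell r \<in> events"
  unfolding low_in_shell_def using finite_box sets_J_shifted_pattern by (intro sets.finite_UN) auto

lemma prob_low_in_shell_le:
  "prob (low_in_shell r) \<le> real (card (box r - box (r - 1) :: (int^'d) set)) * low_prob (real (max (r - b) 1))"
proof -
  have "prob (low_in_shell r)
      \<le> (\<Sum>z\<in>box r - box (r - 1). prob (space M - J_event M w (g (real (max (r - b) 1))) (shift_edges \<A> z)))"
    unfolding low_in_shell_def using finite_box sets_J_shifted_pattern
    by (intro finite_measure_subadditive_finite) auto
  also have "\<dots> = real (card (box r - box (r - 1) :: (int^'d) set)) * low_prob (real (max (r - b) 1))"
    by (simp add: prob_compl sets_J_shifted_pattern prob_J_shifted_pattern)
  finally show ?thesis .
qed

lemma summable_prob_low_in_shell: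
  assumes "(\<integral>\<^sup>+ u\<in>{0<..}. ennreal (u ^ (CARD('d) - 1) * measure \<mu> {..g u} ^ card \<A>) \<partial>lborel) < \<infinity>"
  shows "summable (\<lambda>r. prob (low_in_shell r))"
proof -
  define D where "D = CARD('d) - 1"
  define a where "a s = real s ^ D * low_prob (real s + 1)" for s
  have "summable a"
    using assms unfolding low_prob_def[symmetric] D_def[symmetric]
  proof (rule summable_if_nn_integral_Ioi_finite)
    show "0 \<le> a s" for s unfolding a_def by (simp add: low_prob_nonneg)
    fix s :: nat and u :: real assume u: "real s < u" "u \<le> real s + 1"
    then have "0 < u" using of_nat_0_le_iff[of s] by linarith
    with u show "a s \<le> u ^ D * low_prob u"
      unfolding a_def by (intro mult_mono power_mono low_prob_antimono) (auto simp: low_prob_nonneg)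
  qed
  define C where "C = 2 * real CARD('d) * (2 * real b + 5) ^ D"
  have "summable (\<lambda>r. C * a (r - (b + 1)))"
    using summable_mult[OF \<open>summable a\<close>, of C] summable_iff_shift[of "\<lambda>r. C * a (r - (b + 1))" "b + 1"]
    by simp
  then show ?thesis
  proof (rule summable_comparison_test'[where N = "b + 2"])
    fix r assume "b + 2 \<le> r"
    define s where "s = r - (b + 1)"
    have s: "r = s + b + 1" "1 \<le> s" using \<open>b + 2 \<le> r\<close> unfolding s_def by auto
    have "norm (prob (low_in_shell r)) \<le> real (card (box r - box (r - 1) :: (int^'d) set)) * low_prob (real s + 1)"
      using prob_low_in_shell_le[of r] s by (simp add: add.commute)
    also have "\<dots> \<le> 2 * real CARD('d) * ((2 * real b + 5) * real s) ^ D * low_prob (real s + 1)"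
      using card_box_shell_le_linear[OF s(2), of b] s unfolding D_def
      by (intro mult_right_mono) (simp_all add: low_prob_nonneg)
    also have "\<dots> = C * a (r - (b + 1))"
      unfolding C_def a_def s_def[symmetric] by (simp add: power_mult_distrib)
    finally show "norm (prob (low_in_shell r)) \<le> C * a (r - (b + 1))" .
  qed
qed

lemma low_pattern_within_box:
  assumes escape: "\<And>r. R \<le> r \<Longrightarrow> \<omega> \<notin> low_in_shell r"
    and k: "1 \<le> k" and z: "z \<in> box (k + b)"
    and low: "\<omega> \<in> space M - J_event M w (g (real k)) (shift_edges \<A> z)"
  shows "z \<in> box R"
proof (rule ccontr)
  assume "z \<notin> box R"
  with z obtain r where r: "R < r" "r \<le> k + b" "z \<in> box r - box (r - 1)"
    by (rule box_shell_between)
  have "g (real k) \<le> g (real (max (r - b) 1))"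
    using r(2) k by (intro threshold_antimono) auto
  from J_event_antimono[OF this, of M w "shift_edges \<A> z"] low
  have "\<omega> \<in> space M - J_event M w (g (real (max (r - b) 1))) (shift_edges \<A> z)"
    by blast
  then have "\<omega> \<in> low_in_shell r" unfolding low_in_shell_def using r(3) by blast
  with escape r(1) show False by simp
qed

lemma liminf_J_if_eventually_not_low:
  assumes "\<A> \<noteq> {}" and \<omega>: "\<omega> \<in> space M" and escape: "\<And>r. R \<le> r \<Longrightarrow> \<omega> \<notin> low_in_shell r"
  shows "\<omega> \<in> liminf_J"
proof -
  obtain e where e: "e \<in> \<A>" using assms(1) by blast
  define edge where "edge z = (\<lambda>x. x + z) ` e" for z :: "int^'d"
  have edge: "edge z \<in> shift_edges \<A> z" "edge z \<in> nn_edges" for z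
    using e shifted_pattern_subset unfolding edge_def by (auto simp: shift_edges_def)
  define c where "c = Min ((\<lambda>z. w (edge z) \<omega>) ` box R)"
  have "c > 0" unfolding c_def using finite_box zero_in_box conductance_pos[OF edge(2) \<omega>]
    by (subst Min_gr_iff) auto
  have c_le: "c \<le> w (edge z) \<omega>" if "z \<in> box R" for z
    unfolding c_def using that finite_box by (intro Min_le) auto
  have "((\<lambda>k. g (real k)) \<longlongrightarrow> 0) sequentially"
    using threshold_tendsto_0 filterlim_real_sequentially by (rule filterlim_compose)
  from order_tendstoD(2)[OF this \<open>c > 0\<close>] obtain n where n: "\<And>k. n \<le> k \<Longrightarrow> g (real k) < c"
    unfolding eventually_sequentially by blast
  have exceeds: "\<omega> \<in> J_event M w (g (real k)) (shift_edges \<A> z)"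
    if "max n 1 \<le> k" "z \<in> box (k + b)" for k z
  proof (rule ccontr)
    assume "\<omega> \<notin> J_event M w (g (real k)) (shift_edges \<A> z)"
    with \<omega> have low: "\<omega> \<in> space M - J_event M w (g (real k)) (shift_edges \<A> z)" by simp
    have "1 \<le> k" using that(1) by simp
    with low have "c \<le> w (edge z) \<omega>"
      using low_pattern_within_box[OF escape _ that(2)] c_le by blast
    moreover have "w (edge z) \<omega> \<le> g (real k)"
      using low edge(1)[of z] unfolding J_event_def by force
    moreover have "g (real k) < c" using that(1) n by simp
    ultimately show False by linarith
  qed
  show ?thesis
    unfolding liminf_J_def by (rule UN_I[of "max n 1"]) (simp, intro INT_I exceeds, simp_all)
qed

lemma prob_liminf_J_eq_1:
  assumes "\<A> \<noteq> {}"
    and "(\<integral>\<^sup>+ u\<in>{0<..}. ennreal (u ^ (CARD('d) - 1) * measure \<mu> {..g u} ^ card \<A>) \<partial>lborel) < \<infinity>"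
  shows "prob liminf_J = 1"
proof -
  have "AE \<omega> in M. eventually (\<lambda>r. \<omega> \<in> space M - low_in_shell r) sequentially"
    using sets_low_in_shell summable_prob_low_in_shell[OF assms(2)]
    by (intro borel_cantelli_AE1) (auto simp: emeasure_eq_measure)
  moreover have "\<omega> \<in> liminf_J"
    if "\<omega> \<in> space M" "eventually (\<lambda>r. \<omega> \<in> space M - low_in_shell r) sequentially" for \<omega>
  proof -
    from that(2) obtain R where "\<And>r. R \<le> r \<Longrightarrow> \<omega> \<notin> low_in_shell r"
      unfolding eventually_sequentially by blast
    then show ?thesis by (rule liminf_J_if_eventually_not_low[OF assms(1) that(1)])
  qed
  ultimately have "AE \<omega> in M. \<omega> \<in> liminf_J" by auto
  then show ?thesis using prob_eq_1[OF sets_liminf_J] by simp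
qed

section \<open>The divergent case\<close>

lemma not_summable_grid_low_probs:
  fixes K :: nat
  assumes "b < K"
    and "\<not> (\<integral>\<^sup>+ u\<in>{0<..}. ennreal (u ^ (CARD('d) - 1) * measure \<mu> {..g u} ^ card \<A>) \<partial>lborel) < \<infinity>"
  shows "\<not> summable (\<lambda>s. real s ^ (CARD('d) - 1) * low_prob (real (K * s - b)))"
proof
  define D where "D = CARD('d) - 1"
  define a where "a s = real s ^ D * low_prob (real (K * s - b))" for s
  assume "summable (\<lambda>s. real s ^ (CARD('d) - 1) * low_prob (real (K * s - b)))"
  then have "summable a" unfolding a_def D_def .
  define c where "c s = (if s = 0 then real K ^ D else (2 * real K) ^ D * a s)" for s
  have "summable c"
    by (rule summable_comparison_test'[where N = 1, OF summable_mult[OF \<open>summable a\<close>, of "(2 * real K) ^ D"]])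
      (simp add: c_def a_def low_prob_nonneg)
  have "(\<integral>\<^sup>+ u\<in>{0<..}. ennreal (u ^ D * low_prob u) \<partial>lborel) < \<infinity>"
  proof (rule nn_integral_Ioi_finite_if_summable[OF _ \<open>summable c\<close>])
    show "real K > 0" using assms(1) by simp
    show "0 \<le> c s" for s unfolding c_def a_def by (simp add: low_prob_nonneg)
    fix s :: nat and u :: real
    assume u: "real K * real s < u" "u \<le> real K * (real s + 1)"
    show "u ^ D * low_prob u \<le> c s"
    proof (cases "s = 0")
      case True
      with u have "u ^ D * low_prob u \<le> real K ^ D * 1"
        by (intro mult_mono power_mono low_prob_le_1) (auto simp: low_prob_nonneg)
      then show ?thesis using True by (simp add: c_def)
    next
      case False
      then have "K \<le> K * s" by simp
      then have "b < K * s" using assms(1) by linarith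
      then have bK: "real b < real K * real s" by (metis of_nat_less_iff of_nat_mult)
      then have pos: "0 < real (K * s - b)" and le_u: "real (K * s - b) \<le> u"
        using \<open>b < K * s\<close> u by (simp_all add: of_nat_diff)
      have "real K * 1 \<le> real K * real s" using False by (intro mult_left_mono) auto
      then have "real K * (real s + 1) \<le> 2 * real K * real s" by (simp add: algebra_simps)
      with u have "u ^ D * low_prob u \<le> (2 * real K * real s) ^ D * low_prob (real (K * s - b))"
        using pos le_u bK by (intro mult_mono power_mono low_prob_antimono) (simp_all add: low_prob_nonneg)
      then show ?thesis using False by (simp add: c_def a_def power_mult_distrib)
    qed
  qed
  then show False using assms(2) unfolding low_prob_def[symmetric] D_def by simp
qed

lemma prob_grid_J_le_exp:
  fixes K :: nat and i :: 'd
  assumes "\<A> \<noteq> {}" "2 * b + 1 < K" "1 \<le> n" "n < N"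
  shows "prob (\<Inter>s\<in>{n..<N}. \<Inter>z\<in>grid_face K i s. J_event M w (g (real (K * s - b))) (shift_edges \<A> z))
    \<le> exp (- (\<Sum>s\<in>{n..<N}. real s ^ (CARD('d) - 1) * low_prob (real (K * s - b))))"
proof -
  define I where "I = Sigma {n..<N} (grid_face K i)"
  have "K > 0" using assms(2) by simp
  have "finite I"
    unfolding I_def using finite_grid_face by (intro finite_SigmaI) auto
  have "I \<noteq> {}"
  proof -
    obtain z where "z \<in> grid_face K i n" using grid_face_nonempty[OF assms(3)] by blast
    then have "(n, z) \<in> I" unfolding I_def using assms(4) by simp
    then show ?thesis by blast
  qed
  have "shift_edges \<A> z \<noteq> {}" for z
    using assms(1) unfolding shift_edges_def by simp
  have "prob (\<Inter>s\<in>{n..<N}. \<Inter>z\<in>grid_face K i s. J_event M w (g (real (K * s - b))) (shift_edges \<A> z))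
      = prob (\<Inter>p\<in>I. J_event M w (g (real (K * fst p - b))) (shift_edges \<A> (snd p)))"
    unfolding I_def by (rule arg_cong[where f = prob]) auto
  also have "\<dots> = (\<Prod>p\<in>I. 1 - measure \<mu> {..g (real (K * fst p - b))} ^ card (shift_edges \<A> (snd p)))"
    using finite_shifted_pattern shifted_pattern_subset \<open>\<And>z. shift_edges \<A> z \<noteq> {}\<close>
      disjoint_shift_edges_grid_faces[OF pattern_subset assms(2)]
    by (intro prob_INT_J_event_disjoint[OF \<open>finite I\<close> \<open>I \<noteq> {}\<close>]) (auto simp: I_def)
  also have "\<dots> = (\<Prod>s\<in>{n..<N}. \<Prod>z\<in>grid_face K i s. 1 - low_prob (real (K * s - b)))"
    unfolding I_def by (subst prod.Sigma) (simp_all add: finite_grid_face split_def low_prob_def card_shift_edges)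
  also have "\<dots> = (\<Prod>s\<in>{n..<N}. (1 - low_prob (real (K * s - b))) ^ (s ^ (CARD('d) - 1)))"
    by (simp add: card_grid_face[OF \<open>K > 0\<close>])
  also have "\<dots> \<le> (\<Prod>s\<in>{n..<N}. exp (- (real s ^ (CARD('d) - 1) * low_prob (real (K * s - b)))))"
    by (intro prod_mono conjI zero_le_power one_minus_power_le_exp[THEN order_trans])
      (simp_all add: low_prob_le_1)
  also have "\<dots> = exp (- (\<Sum>s\<in>{n..<N}. real s ^ (CARD('d) - 1) * low_prob (real (K * s - b))))"
    by (simp add: exp_sum[symmetric] sum_negf)
  finally show ?thesis .
qed

definition grid_exceedance :: "nat \<Rightarrow> 'd \<Rightarrow> nat \<Rightarrow> 'a set" where
  "grid_exceedance K i n =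
    (\<Inter>s\<in>{n..}. \<Inter>z\<in>grid_face K i s. J_event M w (g (real (K * s - b))) (shift_edges \<A> z))"

lemma sets_grid_face_J: "1 \<le> s \<Longrightarrow> (\<Inter>z\<in>grid_face K i s. J_event M w t (shift_edges \<A> z)) \<in> events"
  by (intro sets.finite_INT) (simp_all add: finite_grid_face grid_face_nonempty sets_J_shifted_pattern)

lemma sets_grid_exceedance: "1 \<le> n \<Longrightarrow> grid_exceedance K i n \<in> events"
  unfolding grid_exceedance_def by (intro sets.countable_INT') (auto intro: sets_grid_face_J)

lemma prob_grid_exceedance_eq_0:
  assumes "\<A> \<noteq> {}" "2 * b + 1 < K" "1 \<le> n"
    and "\<not> summable (\<lambda>s. real s ^ (CARD('d) - 1) * low_prob (real (K * s - b)))"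
  shows "prob (grid_exceedance K i n) = 0"
proof (rule ccontr)
  define a where "a s = real s ^ (CARD('d) - 1) * low_prob (real (K * s - b))" for s
  assume "prob (grid_exceedance K i n) \<noteq> 0"
  then have pos: "0 < prob (grid_exceedance K i n)" using measure_nonneg by (metis less_eq_real_def)
  have "(\<Sum>s\<in>{n..<N}. a s) \<le> - ln (prob (grid_exceedance K i n))" for N
  proof (cases "n < N")
    case True
    have "prob (grid_exceedance K i n)
        \<le> prob (\<Inter>s\<in>{n..<N}. \<Inter>z\<in>grid_face K i s. J_event M w (g (real (K * s - b))) (shift_edges \<A> z))"
      unfolding grid_exceedance_def
    proof (rule finite_measure_mono)
      show "(\<Inter>s\<in>{n..<N}. \<Inter>z\<in>grid_face K i s. J_event M w (g (real (K * s - b))) (shift_edges \<A> z)) \<in> events"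
        by (rule sets.finite_INT) (use assms(3) True in \<open>auto intro: sets_grid_face_J\<close>)
    qed auto
    also have "\<dots> \<le> exp (- (\<Sum>s\<in>{n..<N}. a s))"
      unfolding a_def using assms True by (intro prob_grid_J_le_exp) auto
    finally have "ln (prob (grid_exceedance K i n)) \<le> ln (exp (- (\<Sum>s\<in>{n..<N}. a s)))"
      using pos by (rule ln_mono)
    then show ?thesis by simp
  qed (use pos in simp)
  then have "summable a"
    by (intro summable_if_tail_sums_bounded) (simp add: a_def low_prob_nonneg)
  with assms(4) show False unfolding a_def by contradiction
qed

lemma liminf_J_subset_grid_exceedance:
  assumes "b < K"
  shows "liminf_J \<subseteq> (\<Union>n\<in>{1..}. grid_exceedance K i n)"
proof
  fix \<omega> assume "\<omega> \<in> liminf_J"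
  then obtain n where n: "1 \<le> n"
    and exceeds: "\<And>k z. n \<le> k \<Longrightarrow> z \<in> box (k + b) \<Longrightarrow> \<omega> \<in> J_event M w (g (real k)) (shift_edges \<A> z)"
    unfolding liminf_J_def by blast
  have "\<omega> \<in> J_event M w (g (real (K * s - b))) (shift_edges \<A> z)" if "n \<le> s" "z \<in> grid_face K i s" for s z
  proof (rule exceeds)
    have "b * 1 \<le> b * s" using that(1) n by (intro mult_le_mono2) simp
    moreover have "(b + 1) * s \<le> K * s" using assms by (intro mult_le_mono1) simp
    ultimately have "n + b \<le> K * s" using that(1) by (simp only: algebra_simps mult_1_right)
    then show "n \<le> K * s - b" "z \<in> box (K * s - b + b)"
      using grid_face_subset_box that(2) by auto
  qed
  then show "\<omega> \<in> (\<Union>n\<in>{1..}. grid_exceedance K i n)" unfolding grid_exceedance_def using n by blast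
qed

lemma prob_liminf_J_eq_0:
  assumes "\<A> \<noteq> {}"
    and "\<not> (\<integral>\<^sup>+ u\<in>{0<..}. ennreal (u ^ (CARD('d) - 1) * measure \<mu> {..g u} ^ card \<A>) \<partial>lborel) < \<infinity>"
  shows "prob liminf_J = 0"
proof -
  fix i :: 'd
  define K where "K = 2 * b + 2"
  have "grid_exceedance K i n \<in> null_sets M" if "1 \<le> n" for n
    using that assms not_summable_grid_low_probs[of K] sets_grid_exceedance[OF that] prob_grid_exceedance_eq_0
    unfolding K_def by (simp add: null_setsI emeasure_eq_measure)
  then have "(\<Union>n\<in>{1..}. grid_exceedance K i n) \<in> null_sets M" by (intro null_sets_UN') auto
  then have "liminf_J \<in> null_sets M"
    by (rule null_sets_subset[OF _ sets_liminf_J liminf_J_subset_grid_exceedance]) (simp add: K_def)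
  then show ?thesis by (simp add: null_sets_def measure_def)
qed

end

theorem lemma2p1:
  fixes M :: "'a measure"
    and w :: "(int^'d) set \<Rightarrow> 'a \<Rightarrow> real"
    and \<mu> :: "real measure"
    and g :: "real \<Rightarrow> real"
    and b :: nat
    and \<A> :: "(int^'d) set set"
  assumes "prob_space M"
    and "CARD('d) \<ge> 2"
    and "prob_space.indep_vars M (\<lambda>_. borel) w nn_edges"
    and "\<And>e. e \<in> nn_edges \<Longrightarrow> distr M borel (w e) = \<mu>"
    and "\<And>e \<omega>. e \<in> nn_edges \<Longrightarrow> \<omega> \<in> space M \<Longrightarrow> w e \<omega> > 0"
    and "\<And>u. u > 0 \<Longrightarrow> g u > 0"
    and "\<And>u v. 0 < u \<Longrightarrow> u \<le> v \<Longrightarrow> g v \<le> g u"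
    and "(g \<longlongrightarrow> 0) at_top"
    and "\<A> \<subseteq> edges_of (box b)"
  shows "measure M (\<Union>n\<in>{1..}. \<Inter>k\<in>{n..}. \<Inter>z\<in>box (k + b).
            J_event M w (g (real k)) (shift_edges \<A> z))
         = (if (\<integral>\<^sup>+ u\<in>{0<..}. ennreal (u ^ (CARD('d) - 1) * measure \<mu> {..g u} ^ card \<A>) \<partial>lborel) < \<infinity>
            then 1 else 0)"
proof -
  interpret decaying_pattern M w \<mu> g b \<A>
    by (intro decaying_pattern.intro iid_conductances.intro iid_conductances_axioms.intro
        decaying_pattern_axioms.intro assms(1,3-9))
  have "(\<Union>n\<in>{1..}. \<Inter>k\<in>{n..}. \<Inter>z\<in>box (k + b). J_event M w (g (real k)) (shift_edges \<A> z)) = liminf_J"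
    by (simp only: liminf_J_def)
  moreover have "\<not> (\<integral>\<^sup>+ u\<in>{0<..}. ennreal (u ^ (CARD('d) - 1) * measure \<mu> {..g u} ^ card \<A>) \<partial>lborel) < \<infinity>"
    if "\<A> = {}"
    using that nn_integral_Ioi_power_infinite by simp
  ultimately show ?thesis
    using liminf_J_empty_pattern prob_liminf_J_eq_1 prob_liminf_J_eq_0 by (cases "\<A> = {}") auto
qed

end
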